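(* Let $d,n\ge1$ and $x_0,x_1,\dots,x_n\in\mathbb{R}^d$. Let $M^*$ be the solution (minimizer) of $$\min_M \tfrac12\|M\|^2 \quad\text{subject to}\quad (x_i-x_0)^T M (x_i-x_0)\ge 2\ \ \forall i\in\{1,\dots,n\},$$ where $M$ ranges over real $d\times d$ matrices. Then $M^*$ is also the solution of $$\min_M \tfrac12\|M\|^2 \quad\text{subject to}\quad (x_i-x_0)^T M (x_i-x_0)\ge 2\ \ \forall i\in\{1,\dots,n\},\quad M\succeq 0.$$
   Context: $\|M\|$ is the Frobenius norm, $\|M\|^2=\sum_{ij}M_{ij}^2$. $M\succeq 0$ means $M$ is a symmetric positive semidefinite matrix. *)

theory Defs
  imports "HOL-Analysis.Analysis"
begin

definition frob_norm :: "real^'n^'m \<Rightarrow> real" where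
  "frob_norm M = sqrt (\<Sum>i\<in>UNIV. \<Sum>j\<in>UNIV. (M $ i $ j)^2)"

definition psd :: "real^'n^'n \<Rightarrow> bool" where
  "psd M \<longleftrightarrow> transpose M = M \<and> (\<forall>v. 0 \<le> v \<bullet> (M *v v))"

definition feasible :: "nat \<Rightarrow> (nat \<Rightarrow> real^'n) \<Rightarrow> real^'n^'n \<Rightarrow> bool" where
  "feasible n x M \<longleftrightarrow> (\<forall>i\<in>{1..n}. 2 \<le> (x i - x 0) \<bullet> (M *v (x i - x 0)))"

end

theory Submission
  imports Defs
begin

text \<open>The Frobenius norm is the Euclidean norm on \<open>real^'d^'d\<close>, and the constraints only see
  the quadratic form \<open>v \<mapsto> v\<^sup>T M v\<close>. Replacing \<open>M\<close> by its symmetric part keeps that form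
  and, by the parallelogram law, lowers the norm unless \<open>M\<close> is symmetric; if \<open>v\<^sup>T M v < 0\<close>,
  adding a suitable multiple of \<open>v v\<^sup>T\<close> increases the form and still lowers the norm. Hence the
  minimizer over the feasible set is already positive semidefinite, so it also minimizes over the
  smaller set with the constraint \<open>M \<succeq> 0\<close>.\<close>

lemma frob_norm_eq_norm: "frob_norm M = norm M"
  unfolding frob_norm_def norm_eq_sqrt_inner inner_vec_def by (simp add: power2_eq_square)

lemma inner_matrix: "inner M N = (\<Sum>i\<in>UNIV. \<Sum>j\<in>UNIV. M$i$j * N$i$j)"
  for M N :: "real^'m^'n"
  by (simp add: inner_vec_def)

lemma norm_transpose: "norm (transpose M) = norm M"
  for M :: "real^'m^'n"
proof -
  have "inner (transpose M) (transpose M) = inner M M"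
    unfolding inner_matrix transpose_def vec_lambda_beta by (rule sum.swap)
  then show ?thesis
    by (simp add: norm_eq_sqrt_inner)
qed

lemma quadratic_form_transpose: "v \<bullet> (transpose M *v v) = v \<bullet> (M *v v)"
  for M :: "real^'n^'n"
  by (metis dot_lmul_matrix inner_commute vector_transpose_matrix)

definition sym_part :: "real^'n^'n \<Rightarrow> real^'n^'n" where
  "sym_part M = (1/2) *\<^sub>R (M + transpose M)"

definition skew_part :: "real^'n^'n \<Rightarrow> real^'n^'n" where
  "skew_part M = (1/2) *\<^sub>R (M - transpose M)"

lemma quadratic_form_sym_part: "v \<bullet> (sym_part M *v v) = v \<bullet> (M *v v)"
proof -
  have "sym_part M *v v = (1/2) *\<^sub>R (M *v v + transpose M *v v)"
    by (simp add: sym_part_def scaleR_matrix_vector_assoc[symmetric] matrix_vector_mult_add_rdistrib)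
  then show ?thesis
    by (simp only: inner_scaleR_right inner_add_right quadratic_form_transpose) simp
qed

text \<open>The parallelogram law for \<open>M\<close> and its transpose, which has the same norm.\<close>
lemma norm_sym_part_skew_part: "(norm (sym_part M))\<^sup>2 + (norm (skew_part M))\<^sup>2 = (norm M)\<^sup>2"
proof -
  have "(norm (M + transpose M))\<^sup>2 + (norm (M - transpose M))\<^sup>2 = 4 * (norm M)\<^sup>2"
    using dot_norm[of M "transpose M"] dot_norm_neg[of M "transpose M"] by (simp add: norm_transpose)
  then show ?thesis
    by (simp add: sym_part_def skew_part_def power_divide)
qed

lemma symmetric_if_norm_le_sym_part:
  assumes "norm M \<le> norm (sym_part M)"
  shows "transpose M = M"
proof -
  have "(norm M)\<^sup>2 \<le> (norm (sym_part M))\<^sup>2"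
    using assms by (simp add: power_mono)
  then have "(norm (skew_part M))\<^sup>2 \<le> 0"
    using norm_sym_part_skew_part[of M] by linarith
  then have "skew_part M = 0"
    by simp
  then show ?thesis
    by (simp add: skew_part_def)
qed

lemma norm_add_projection_step_less:
  fixes a b :: "'a::real_inner"
  assumes "inner a b < 0"
  shows "norm (a + (- inner a b / (norm b)\<^sup>2) *\<^sub>R b) < norm a"
proof -
  have "b \<noteq> 0"
    using assms by auto
  define t where "t = - inner a b / (norm b)\<^sup>2"
  have "(norm (a + t *\<^sub>R b))\<^sup>2 = (norm a)\<^sup>2 + 2 * t * inner a b + t\<^sup>2 * (norm b)\<^sup>2"
    by (simp only: power2_norm_eq_inner) (simp add: inner_commute power2_eq_square algebra_simps)
  also have "\<dots> = (norm a)\<^sup>2 - (inner a b)\<^sup>2 / (norm b)\<^sup>2"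
    using \<open>b \<noteq> 0\<close> by (simp add: t_def field_simps power2_eq_square)
  also have "\<dots> < (norm a)\<^sup>2"
    using assms \<open>b \<noteq> 0\<close> by simp
  finally show ?thesis
    by (simp add: t_def power_less_imp_less_base)
qed

definition outer_product :: "real^'n \<Rightarrow> real^'m \<Rightarrow> real^'m^'n" where
  "outer_product v w = (\<chi> i j. v$i * w$j)"

lemma inner_outer_product: "inner M (outer_product v w) = v \<bullet> (M *v w)"
  unfolding inner_matrix outer_product_def
  by (simp add: inner_vec_def matrix_vector_mult_def sum_distrib_left mult_ac)

lemma quadratic_form_outer_product: "w \<bullet> (outer_product v v *v w) = (v \<bullet> w)\<^sup>2"
  unfolding outer_product_def
  by (simp add: inner_vec_def matrix_vector_mult_def sum_distrib_left sum_product power2_eq_square mult_ac)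

text \<open>If \<open>v\<^sup>T M v < 0\<close>, adding a nonnegative multiple of \<open>v v\<^sup>T\<close> lowers no value of the
  quadratic form of \<open>M\<close> and yet, by the projection step above, lowers the Frobenius norm.\<close>
lemma quadratic_form_nonneg_if_norm_minimal:
  fixes M :: "real^'n^'n"
  assumes min: "\<And>N. (\<And>w. w \<bullet> (M *v w) \<le> w \<bullet> (N *v w)) \<Longrightarrow> norm M \<le> norm N"
  shows "0 \<le> v \<bullet> (M *v v)"
proof (rule ccontr)
  let ?P = "outer_product v v"
  assume "\<not> ?thesis"
  then have neg: "inner M ?P < 0"
    by (simp add: inner_outer_product)
  define t where "t = - inner M ?P / (norm ?P)\<^sup>2"
  have "0 \<le> t"
    using neg by (simp add: t_def divide_nonpos_nonneg)
  have "norm M \<le> norm (M + t *\<^sub>R ?P)"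
    by (rule min) (simp add: matrix_vector_mult_add_rdistrib scaleR_matrix_vector_assoc[symmetric]
        inner_add_right quadratic_form_outer_product \<open>0 \<le> t\<close>)
  moreover have "norm (M + t *\<^sub>R ?P) < norm M"
    using norm_add_projection_step_less[OF neg] by (simp add: t_def)
  ultimately show False
    by simp
qed

theorem theorem2:
  fixes x :: "nat \<Rightarrow> real^'d" and n :: nat and Mstar :: "real^'d^'d"
  assumes "n \<ge> 1"
    and "feasible n x Mstar"
    and "\<forall>M. feasible n x M \<longrightarrow> (1/2) * (frob_norm Mstar)^2 \<le> (1/2) * (frob_norm M)^2"
  shows "feasible n x Mstar \<and> psd Mstar \<and>
         (\<forall>M. feasible n x M \<and> psd M \<longrightarrow> (1/2) * (frob_norm Mstar)^2 \<le> (1/2) * (frob_norm M)^2)"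
proof -
  have min: "norm Mstar \<le> norm N" if "feasible n x N" for N
    using assms(3) that by (auto simp: frob_norm_eq_norm intro: power2_le_imp_le)
  have "feasible n x (sym_part Mstar)"
    using assms(2) by (simp add: feasible_def quadratic_form_sym_part)
  then have "transpose Mstar = Mstar"
    by (intro symmetric_if_norm_le_sym_part min)
  moreover have "0 \<le> v \<bullet> (Mstar *v v)" for v
  proof (rule quadratic_form_nonneg_if_norm_minimal)
    fix N :: "real^'d^'d"
    assume "\<And>w. w \<bullet> (Mstar *v w) \<le> w \<bullet> (N *v w)"
    then have "feasible n x N"
      using assms(2) unfolding feasible_def by (meson order.trans)
    then show "norm Mstar \<le> norm N"
      by (rule min)
  qed
  ultimately show ?thesis
    using assms(2,3) unfolding psd_def by blast
qed

end
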